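(* Let $n$ be an integer with $n\neq\pm1$ such that $3n$ is not a square. Then the polynomial $P_n(X)=X^3-3(n+1)X+2(n+1)\in\mathbb Q[X]$ has Galois group over $\mathbb Q$ isomorphic to $S_3$. *)

theory Defs
  imports Complex_Main "HOL-Algebra.Sym_Groups" "HOL-Computational_Algebra.Polynomial"
begin

definition subfield_C :: "complex set \<Rightarrow> bool" where
  "subfield_C K \<longleftrightarrow> 0 \<in> K \<and> 1 \<in> K \<and>
     (\<forall>x\<in>K. \<forall>y\<in>K. x + y \<in> K \<and> x * y \<in> K) \<and>
     (\<forall>x\<in>K. - x \<in> K \<and> inverse x \<in> K)"

definition splitting_field_C :: "rat poly \<Rightarrow> complex set" where
  "splitting_field_C p =
     \<Inter>{K. subfield_C K \<and> {z. poly (map_poly of_rat p) z = 0} \<subseteq> K}"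

definition gal_group :: "rat poly \<Rightarrow> (complex \<Rightarrow> complex) monoid" where
  "gal_group p =
    (let K = splitting_field_C p in
     \<lparr> carrier = {\<sigma>. bij_betw \<sigma> K K \<and>
                    (\<forall>x\<in>K. \<forall>y\<in>K. \<sigma> (x + y) = \<sigma> x + \<sigma> y \<and> \<sigma> (x * y) = \<sigma> x * \<sigma> y) \<and>
                    (\<forall>r. \<sigma> (of_rat r) = of_rat r) \<and>
                    (\<forall>x. x \<notin> K \<longrightarrow> \<sigma> x = x)},
       mult = (\<lambda>\<sigma> \<tau>. \<sigma> \<circ> \<tau>),
       one = id \<rparr>)"

end

theory Submission
  imports Defs "HOL-Computational_Algebra.Fundamental_Theorem_Algebra"
    "HOL-Computational_Algebra.Polynomial_Factorial" "HOL-Computational_Algebra.Field_as_Ring"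
    "HOL-Computational_Algebra.Nth_Powers"
begin

text \<open>Let \<open>a, b, c\<close> be the complex roots of an irreducible rational cubic \<open>X\<^sup>3 + P X + Q\<close>
  whose discriminant is not a rational square. Then \<open>b\<close> is not a rational polynomial in \<open>a\<close>:
  otherwise the square root \<open>(a - b)(b - c)(c - a)\<close> of the discriminant would be one too, and a trace
  argument makes it rational. Consequently every element of the splitting field \<open>\<rat>(a, b)\<close> is
  uniquely of the form \<open>f(a) + g(a) b\<close> modulo the cubic, and for every ordered pair \<open>(x, y)\<close> of
  distinct roots \<open>f(a) + g(a) b \<mapsto> f(x) + g(x) y\<close> is a field automorphism. An automorphism is
  determined by the images of \<open>a\<close> and \<open>b\<close>, so the Galois group acts on the roots as the full
  symmetric group. \<open>P\<^sub>n\<close> is such a cubic: a rational root would be an integer \<open>r\<close> with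
  \<open>3 r - 2\<close> dividing 8, and its discriminant is \<open>3 n (6 (n + 1))\<^sup>2\<close>.\<close>

section \<open>Rational polynomials evaluated in fields of characteristic zero\<close>

definition rpoly :: "rat poly \<Rightarrow> 'a::field_char_0 \<Rightarrow> 'a" where
  "rpoly f = poly (map_poly of_rat f)"

lemma rpoly_0 [simp]: "rpoly 0 z = 0"
  by (simp add: rpoly_def)

lemma rpoly_pCons [simp]: "rpoly (pCons r f) z = of_rat r + z * rpoly f z"
  by (simp add: rpoly_def map_poly_pCons)

lemma rpoly_1 [simp]: "rpoly 1 z = 1"
  by (simp add: one_pCons)

lemma rpoly_add [simp]: "rpoly (f + g) z = rpoly f z + rpoly g z"
proof (induction f arbitrary: g)
  case (pCons r f)
  then show ?case
    by (cases g) (simp_all add: of_rat_add algebra_simps)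
qed simp

lemma rpoly_minus [simp]: "rpoly (- f) z = - rpoly f z"
  by (induction f) (simp_all add: of_rat_minus)

lemma rpoly_diff [simp]: "rpoly (f - g) z = rpoly f z - rpoly g z"
  using rpoly_add [of f "- g" z] by simp

lemma rpoly_smult [simp]: "rpoly (smult r f) z = of_rat r * rpoly f z"
  by (induction f) (simp_all add: of_rat_mult algebra_simps)

lemma rpoly_mult [simp]: "rpoly (f * g) z = rpoly f z * rpoly g z"
  by (induction f) (simp_all add: algebra_simps)

lemma rpoly_eq_0_if_dvd: "q dvd f \<Longrightarrow> rpoly q z = 0 \<Longrightarrow> rpoly f z = 0"
  by (auto elim: dvdE)

section \<open>Subfields, splitting fields and Galois groups\<close>

lemma subfield_C_of_int: "subfield_C K \<Longrightarrow> of_int k \<in> K"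
proof -
  assume K: "subfield_C K"
  have "of_nat m \<in> K" for m
    by (induction m) (use K in \<open>auto simp: subfield_C_def\<close>)
  then show ?thesis
    using K by (cases k rule: int_cases2) (auto simp: subfield_C_def)
qed

lemma subfield_C_of_rat: "subfield_C K \<Longrightarrow> of_rat r \<in> K"
proof -
  assume K: "subfield_C K"
  obtain u v where "of_rat r = (of_int u / of_int v :: complex)"
    using Rats_cases' [OF Rats_of_rat [of r]] by metis
  then show ?thesis
    using K subfield_C_of_int [OF K] by (simp add: subfield_C_def divide_inverse)
qed

lemma subfield_C_rpoly: "subfield_C K \<Longrightarrow> x \<in> K \<Longrightarrow> rpoly f x \<in> K"
  by (induction f) (auto simp: subfield_C_of_rat subfield_C_def)

lemma subfield_C_Inter: "(\<And>K. K \<in> \<K> \<Longrightarrow> subfield_C K) \<Longrightarrow> subfield_C (\<Inter>\<K>)"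
  by (simp add: subfield_C_def)

lemma subfield_splitting_field_C: "subfield_C (splitting_field_C p)"
  unfolding splitting_field_C_def by (rule subfield_C_Inter) blast

lemma root_in_splitting_field_C: "rpoly p z = 0 \<Longrightarrow> z \<in> splitting_field_C p"
  by (auto simp: splitting_field_C_def rpoly_def)

lemma splitting_field_C_eqI:
  assumes "subfield_C L" and "\<And>z. rpoly p z = 0 \<Longrightarrow> z \<in> L"
    and "\<And>K. subfield_C K \<Longrightarrow> (\<And>z. rpoly p z = 0 \<Longrightarrow> z \<in> K) \<Longrightarrow> L \<subseteq> K"
  shows "splitting_field_C p = L"
  using assms unfolding splitting_field_C_def rpoly_def by blast

lemma gal_group_carrier:
  "\<sigma> \<in> carrier (gal_group p) \<longleftrightarrow>
     bij_betw \<sigma> (splitting_field_C p) (splitting_field_C p) \<and>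
     (\<forall>x\<in>splitting_field_C p. \<forall>y\<in>splitting_field_C p.
        \<sigma> (x + y) = \<sigma> x + \<sigma> y \<and> \<sigma> (x * y) = \<sigma> x * \<sigma> y) \<and>
     (\<forall>r. \<sigma> (of_rat r) = of_rat r) \<and> (\<forall>x. x \<notin> splitting_field_C p \<longrightarrow> \<sigma> x = x)"
  by (simp add: gal_group_def Let_def)

lemma gal_group_memI:
  assumes "bij_betw \<sigma> (splitting_field_C p) (splitting_field_C p)"
    and "\<And>x y. x \<in> splitting_field_C p \<Longrightarrow> y \<in> splitting_field_C p \<Longrightarrow>
      \<sigma> (x + y) = \<sigma> x + \<sigma> y"
    and "\<And>x y. x \<in> splitting_field_C p \<Longrightarrow> y \<in> splitting_field_C p \<Longrightarrow>
      \<sigma> (x * y) = \<sigma> x * \<sigma> y"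
    and "\<And>r. \<sigma> (of_rat r) = of_rat r" and "\<And>x. x \<notin> splitting_field_C p \<Longrightarrow> \<sigma> x = x"
  shows "\<sigma> \<in> carrier (gal_group p)"
  unfolding gal_group_carrier using assms by blast

lemma gal_group_mult: "mult (gal_group p) = (\<circ>)"
  by (simp add: gal_group_def Let_def fun_eq_iff)

context
  fixes p :: "rat poly" and \<sigma> :: "complex \<Rightarrow> complex"
  assumes \<sigma>: "\<sigma> \<in> carrier (gal_group p)"
begin

private abbreviation (input) K where "K \<equiv> splitting_field_C p"

lemma gal_group_add: "x \<in> K \<Longrightarrow> y \<in> K \<Longrightarrow> \<sigma> (x + y) = \<sigma> x + \<sigma> y"
  and gal_group_times: "x \<in> K \<Longrightarrow> y \<in> K \<Longrightarrow> \<sigma> (x * y) = \<sigma> x * \<sigma> y"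
  and gal_group_of_rat: "\<sigma> (of_rat r) = of_rat r"
  and gal_group_inj_on: "inj_on \<sigma> K"
  and gal_group_outside: "x \<notin> K \<Longrightarrow> \<sigma> x = x"
  using \<sigma> by (auto simp: gal_group_carrier bij_betw_def)

lemma gal_group_rpoly: "u \<in> K \<Longrightarrow> \<sigma> (rpoly f u) = rpoly f (\<sigma> u)"
proof (induction f)
  case 0
  then show ?case
    using gal_group_of_rat [of 0] by simp
next
  case (pCons r f)
  have "rpoly f u \<in> K" "of_rat r \<in> K"
    using pCons.prems subfield_splitting_field_C subfield_C_rpoly subfield_C_of_rat by blast+
  then show ?case
    using pCons subfield_splitting_field_C [of p]
    by (simp add: gal_group_add gal_group_times gal_group_of_rat subfield_C_def)
qed

lemma gal_group_root: "rpoly p u = 0 \<Longrightarrow> rpoly p (\<sigma> u) = 0"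
  using gal_group_rpoly [of u p] gal_group_of_rat [of 0] root_in_splitting_field_C by force

end

section \<open>Irreducibility and rational roots\<close>

lemma irreducible_if_no_roots:
  fixes p :: "'a::field poly"
  assumes deg: "degree p \<in> {2, 3}" and no_root: "\<And>x. poly p x \<noteq> 0"
  shows "irreducible p"
proof (rule irreducibleI)
  show p0: "p \<noteq> 0"
    using deg by auto
  then show "\<not> is_unit p"
    using deg by (auto simp: is_unit_iff_degree)
  have no_linear_factor: "degree u \<noteq> 1" if "p = u * v" for u v
  proof
    assume "degree u = 1"
    then obtain s t where "u = [:t, s:]" "s \<noteq> 0"
      by (rule degree1_coeffs)
    then have "poly p (- t / s) = 0"
      using \<open>p = u * v\<close> by simp
    then show False
      using no_root by blast
  qed
  fix u v
  assume uv: "p = u * v"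
  then have "u \<noteq> 0" "v \<noteq> 0" "degree u + degree v = degree p"
    using p0 by (auto simp: degree_mult_eq)
  moreover have "degree u \<noteq> 1" "degree v \<noteq> 1"
    using no_linear_factor [of u v] no_linear_factor [of v u] uv by (simp_all add: mult.commute)
  ultimately show "is_unit u \<or> is_unit v"
    using deg by (auto simp: is_unit_iff_degree)
qed

context
  fixes p :: "rat poly" and r :: "'a::field_char_0"
  assumes irreducible: "irreducible p" and root: "rpoly p r = 0"
begin

lemma rpoly_inverse_if_not_dvd:
  assumes "\<not> p dvd f"
  obtains t where "rpoly t r * rpoly f r = 1"
proof -
  have "gcd p f = 1"
    using assms irreducible by (simp add: field_poly_irreducible_imp_prime prime_elem_imp_coprime)
  then obtain s t where "s * p + t * f = 1"
    by (metis bezout_coefficients_fst_snd)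
  then have "rpoly s r * rpoly p r + rpoly t r * rpoly f r = 1"
    by (metis rpoly_1 rpoly_add rpoly_mult)
  then show ?thesis
    using root that by simp
qed

lemma irreducible_dvd_if_common_root: "rpoly f r = 0 \<Longrightarrow> p dvd f"
  using rpoly_inverse_if_not_dvd by (metis mult_zero_right zero_neq_one)

lemma irreducible_rpoly_inverse:
  assumes "rpoly f r \<noteq> 0"
  obtains t where "rpoly t r * rpoly f r = 1"
  using assms root rpoly_eq_0_if_dvd rpoly_inverse_if_not_dvd by blast

end

lemma rat_root_of_int_depressed_cubic_in_Ints:
  fixes P Q :: int and x :: rat
  assumes "x ^ 3 + of_int P * x + of_int Q = 0"
  shows "x \<in> \<int>"
proof -
  obtain u v where v: "v > 0" "coprime u v" and x: "x = of_int u / of_int v"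
    by (metis Rats_cases' Rats_of_rat of_rat_eq_id id_apply)
  have "of_int (u ^ 3 + P * u * v ^ 2 + Q * v ^ 3) = (0 :: rat)"
    using assms v(1) unfolding x by (simp add: field_simps power3_eq_cube power2_eq_square)
  then have "u ^ 3 = v * (- P * u * v - Q * v ^ 2)"
    unfolding of_int_eq_0_iff by (simp add: algebra_simps power2_eq_square power3_eq_cube)
  then have "v dvd u ^ 3"
    by simp
  moreover have "coprime v (u ^ 3)"
    using v(2) by (simp add: coprime_commute)
  ultimately have "is_unit v"
    using coprime_common_divisor [of v "u ^ 3" v] by simp
  then show ?thesis
    using v(1) unfolding x by simp
qed

lemma int_square_if_rat_square:
  assumes "is_square (of_int k :: rat)"
  shows "is_square k"
proof -
  obtain r :: rat where r: "of_int k = r ^ 2"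
    using assms by (auto elim: is_nth_powerE)
  obtain u v where v: "v > 0" "coprime u v" and "r = of_int u / of_int v"
    by (metis Rats_cases' Rats_of_rat of_rat_eq_id id_apply)
  then have "r * of_int v = of_int u"
    by simp
  then have "of_int (k * v ^ 2) = (of_int (u ^ 2) :: rat)"
    using r by (metis of_int_mult of_int_power power_mult_distrib)
  then have k: "k * v ^ 2 = u ^ 2"
    by (simp only: of_int_eq_iff)
  moreover have "coprime (v ^ 2) (u ^ 2)"
    using v(2) by (simp add: coprime_commute)
  ultimately have "is_unit (v ^ 2)"
    using coprime_common_divisor [of "v ^ 2" "u ^ 2" "v ^ 2"] by (metis dvd_refl dvd_triv_right)
  then have "v = 1"
    using v(1) by (simp add: power2_eq_square zmult_eq_1_iff)
  then show ?thesis
    using k by auto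
qed

section \<open>Depressed cubics\<close>

definition depressed_cubic :: "rat \<Rightarrow> rat \<Rightarrow> rat poly" where
  "depressed_cubic P Q = [:Q, P, 0, 1:]"

definition cubic_disc :: "rat \<Rightarrow> rat \<Rightarrow> rat" where
  "cubic_disc P Q = - 4 * P ^ 3 - 27 * Q ^ 2"

lemma rpoly_depressed_cubic: "rpoly (depressed_cubic P Q) z = z ^ 3 + of_rat P * z + of_rat Q"
  by (simp add: depressed_cubic_def algebra_simps power3_eq_cube)

locale depressed_cubic_roots =
  fixes P Q :: rat and a b c :: complex
  assumes sum_roots: "a + b + c = 0"
    and sum_products: "a * b + b * c + c * a = of_rat P"
    and prod_roots: "a * b * c = - of_rat Q"
begin

abbreviation p :: "rat poly" where "p \<equiv> depressed_cubic P Q"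

lemma third_root: "c = - a - b"
  using sum_roots by (simp add: eq_neg_iff_add_eq_0 algebra_simps)

lemma rpoly_factored: "rpoly p z = (z - a) * (z - b) * (z - c)"
  using sum_roots sum_products prod_roots unfolding rpoly_depressed_cubic by algebra

lemma root_iff: "rpoly p z = 0 \<longleftrightarrow> z = a \<or> z = b \<or> z = c"
  by (simp add: rpoly_factored)

lemma vandermonde_square: "((a - b) * (b - c) * (c - a)) ^ 2 = of_rat (cubic_disc P Q)"
proof -
  have "of_rat (cubic_disc P Q) = - 4 * of_rat P ^ 3 - 27 * (of_rat Q :: complex) ^ 2"
    by (simp add: cubic_disc_def of_rat_diff of_rat_minus of_rat_mult of_rat_power)
  then show ?thesis
    using sum_roots sum_products prod_roots by algebra
qed

lemma times_coords:
  "(rpoly f a + rpoly g a * b) * (rpoly f' a + rpoly g' a * b) =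
     rpoly (f * f' - g * g' * [:P, 0, 1:]) a + rpoly (f * g' + f' * g - g * g' * [:0, 1:]) a * b"
proof -
  have "b ^ 2 = - of_rat P - a * b - a ^ 2"
    using sum_roots sum_products by algebra
  moreover have "rpoly [:P, 0, 1:] a = of_rat P + a ^ 2" "rpoly [:0, 1:] a = a"
    by (simp_all add: power2_eq_square)
  ultimately show ?thesis
    unfolding rpoly_add rpoly_diff rpoly_mult by algebra
qed

lemma times_conjugate:
  "(rpoly f a + rpoly g a * b) * (rpoly f a + rpoly g a * c) =
     rpoly (f * f - f * g * [:0, 1:] + g * g * [:P, 0, 1:]) a"
proof -
  have "b + c = - a" "b * c = a ^ 2 + of_rat P"
    using sum_roots sum_products by algebra+
  moreover have "rpoly [:P, 0, 1:] a = of_rat P + a ^ 2" "rpoly [:0, 1:] a = a"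
    by (simp_all add: power2_eq_square)
  ultimately show ?thesis
    unfolding rpoly_add rpoly_diff rpoly_mult by algebra
qed

end

lemma depressed_cubic_roots_exist:
  obtains a b c where "depressed_cubic_roots P Q a b c"
proof -
  have "degree (map_poly (of_rat :: rat \<Rightarrow> complex) (depressed_cubic P Q)) = 3"
    by (simp add: degree_map_poly depressed_cubic_def)
  then obtain a :: complex where "rpoly (depressed_cubic P Q) a = 0"
    using fundamental_theorem_of_algebra constant_degree unfolding rpoly_def
    by (metis zero_neq_numeral)
  then have a: "a ^ 3 + of_rat P * a + of_rat Q = 0"
    by (simp add: rpoly_depressed_cubic)
  define s where "s = csqrt (- 3 * a ^ 2 - 4 * of_rat P)"
  have s: "s ^ 2 = - 3 * a ^ 2 - 4 * of_rat P"
    by (simp add: s_def)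
  \<comment> \<open>the other two roots solve \<open>z\<^sup>2 + a z + (a\<^sup>2 + P) = 0\<close>\<close>
  define b c where "b = (- a + s) / 2" and "c = (- a - s) / 2"
  have bc: "b + c = - a" "b * c = a ^ 2 + of_rat P"
    using s by (simp_all add: b_def c_def field_simps power2_eq_square)
  have "depressed_cubic_roots P Q a b c"
  proof
    show "a + b + c = 0"
      using bc by (simp add: add.assoc)
    show "a * b + b * c + c * a = of_rat P"
      using bc by algebra
    show "a * b * c = - of_rat Q"
      using bc a by algebra
  qed
  then show ?thesis
    using that by blast
qed

lemma depressed_cubic_roots_of_two_roots:
  assumes x: "rpoly (depressed_cubic P Q) x = 0" and y: "rpoly (depressed_cubic P Q) y = 0"
    and "x \<noteq> y"
  shows "depressed_cubic_roots P Q x y (- x - y)"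
proof
  have "(x - y) * (x ^ 2 + x * y + y ^ 2 + of_rat P) = 0"
    using x y unfolding rpoly_depressed_cubic by algebra
  then have xy: "x ^ 2 + x * y + y ^ 2 = - of_rat P"
    using \<open>x \<noteq> y\<close> by (simp add: eq_neg_iff_add_eq_0 add.assoc)
  show "x + y + (- x - y) = 0"
    by simp
  show "x * y + y * (- x - y) + (- x - y) * x = of_rat P"
    using xy by algebra
  show "x * y * (- x - y) = - of_rat Q"
    using xy x unfolding rpoly_depressed_cubic by algebra
qed

section \<open>Irreducible cubics with non-square discriminant\<close>

lemma Rats_if_odd_signed_sum:
  fixes d :: "'a::field_char_0"
  assumes "u \<in> {d, - d}" "v \<in> {d, - d}" "w \<in> {d, - d}" and "u + v + w \<in> \<rat>"
  shows "d \<in> \<rat>"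
proof -
  have "u + v + w \<in> {d, - d, 3 * d, - 3 * d}"
    using assms(1-3) by auto
  then show ?thesis
    using assms(4) Rats_divide [of "3 * d" 3] by (auto simp: Rats_minus_iff)
qed

definition rat_adjoin :: "complex \<Rightarrow> complex \<Rightarrow> complex set" where
  "rat_adjoin x y = range (\<lambda>(f, g). rpoly f x + rpoly g x * y)"

lemma rat_adjoin_in: "rpoly f x + rpoly g x * y \<in> rat_adjoin x y"
  unfolding rat_adjoin_def by (rule image_eqI [of _ _ "(f, g)"]) simp_all

lemma rat_adjoin_cases:
  assumes "u \<in> rat_adjoin x y"
  obtains f g where "u = rpoly f x + rpoly g x * y"
  using assms unfolding rat_adjoin_def by auto

locale S3_cubic = depressed_cubic_roots +
  assumes irreducible: "irreducible (depressed_cubic P Q)"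
    and disc_not_square: "\<not> is_square (cubic_disc P Q)"
begin

lemma roots_distinct: "a \<noteq> b" "b \<noteq> c" "c \<noteq> a"
proof -
  have "cubic_disc P Q \<noteq> 0"
    using disc_not_square by auto
  then have "(a - b) * (b - c) * (c - a) \<noteq> 0"
    using vandermonde_square by (metis of_rat_eq_0_iff zero_power2)
  then show "a \<noteq> b" "b \<noteq> c" "c \<noteq> a"
    by auto
qed

lemma vandermonde_not_rational: "(a - b) * (b - c) * (c - a) \<notin> \<rat>"
proof
  assume "(a - b) * (b - c) * (c - a) \<in> \<rat>"
  then obtain q where "(a - b) * (b - c) * (c - a) = of_rat q"
    by (elim Rats_cases)
  then have "cubic_disc P Q = q ^ 2"
    using vandermonde_square by (metis of_rat_eq_iff of_rat_power)
  then show False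
    using disc_not_square by auto
qed

lemma dvd_if_root: "rpoly p z = 0 \<Longrightarrow> rpoly f z = 0 \<Longrightarrow> p dvd f"
  using irreducible_dvd_if_common_root [OF irreducible] .

lemma sum_rpoly_roots_rational: "rpoly f a + rpoly f b + rpoly f c \<in> \<rat>"
proof -
  define m where "m = f mod p"
  have p0: "p \<noteq> 0"
    by (simp add: depressed_cubic_def)
  have "rpoly f z = rpoly m z" if "rpoly p z = 0" for z
  proof -
    have "rpoly f z = rpoly (f div p * p + m) z"
      by (simp only: m_def div_mult_mod_eq)
    then show ?thesis
      using that by simp
  qed
  then have f_m: "rpoly f z = rpoly m z" if "z = a \<or> z = b \<or> z = c" for z
    using that root_iff by blast
  have "degree m \<le> 2"
    using degree_mod_less [OF p0, of f] unfolding m_def by (auto simp: depressed_cubic_def)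
  then have m: "m = [:coeff m 0, coeff m 1, coeff m 2:]"
    by (intro poly_eqI) (auto simp: coeff_pCons coeff_eq_0 numeral_2_eq_2 split: nat.split)
  have "a ^ 2 + b ^ 2 + c ^ 2 = - 2 * of_rat P"
    using sum_roots sum_products by algebra
  then have "rpoly m a + rpoly m b + rpoly m c =
      3 * of_rat (coeff m 0) - 2 * of_rat P * of_rat (coeff m 2)"
    using sum_roots by (subst (1 2 3) m) (simp, algebra)
  also have "\<dots> \<in> \<rat>"
    by simp
  finally show ?thesis
    using f_m by simp
qed

text \<open>If \<open>b\<close> were a polynomial in \<open>a\<close>, then so would be the Vandermonde product
  \<open>\<delta> = (a - b)(b - c)(c - a)\<close>, say \<open>\<delta> = k(a)\<close>. Since \<open>k\<^sup>2 - \<delta>\<^sup>2\<close> vanishes at the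
  root \<open>a\<close> of the irreducible \<open>p\<close>, \<open>k(r) = \<plusminus>\<delta>\<close> at every root \<open>r\<close>, and the rational trace
  \<open>k(a) + k(b) + k(c)\<close> would be an odd multiple of the irrational \<open>\<delta>\<close>.\<close>

lemma root_not_rpoly_of_root: "rpoly h a \<noteq> b"
proof
  assume h: "rpoly h a = b"
  define X :: "rat poly" where "X = [:0, 1:]"
  define k where "k = (X - h) * (h - (- X - h)) * ((- X - h) - X)"
  define \<delta> where "\<delta> = (a - b) * (b - c) * (c - a)"
  have "rpoly X a = a"
    by (simp add: X_def)
  then have "rpoly k a = \<delta>"
    unfolding k_def \<delta>_def third_root rpoly_mult rpoly_diff rpoly_minus h by (rule arg_cong)
  then have "rpoly (k * k - [:cubic_disc P Q:]) a = 0"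
    using vandermonde_square unfolding \<delta>_def by (simp add: power2_eq_square)
  then have "p dvd k * k - [:cubic_disc P Q:]"
    using dvd_if_root root_iff by blast
  then have "rpoly (k * k - [:cubic_disc P Q:]) r = 0" if "rpoly p r = 0" for r
    using rpoly_eq_0_if_dvd that by blast
  then have "rpoly k r * rpoly k r = \<delta> * \<delta>" if "rpoly p r = 0" for r
    using that vandermonde_square unfolding \<delta>_def by (simp add: power2_eq_square)
  then have "rpoly k r \<in> {\<delta>, - \<delta>}" if "rpoly p r = 0" for r
    using that by (auto simp: square_eq_iff)
  then have "rpoly k a \<in> {\<delta>, - \<delta>}" "rpoly k b \<in> {\<delta>, - \<delta>}" "rpoly k c \<in> {\<delta>, - \<delta>}"
    by (simp_all add: root_iff)
  then have "\<delta> \<in> \<rat>"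
    using sum_rpoly_roots_rational by (rule Rats_if_odd_signed_sum)
  then show False
    using vandermonde_not_rational unfolding \<delta>_def by blast
qed

lemma coords_zero_imp_dvd:
  assumes "rpoly f a + rpoly g a * b = 0"
  shows "p dvd f" and "p dvd g"
proof -
  have "rpoly g a = 0"
  proof (rule ccontr)
    assume "rpoly g a \<noteq> 0"
    then obtain t where t: "rpoly t a * rpoly g a = 1"
      using irreducible_rpoly_inverse [OF irreducible] root_iff by blast
    have "rpoly (- (t * f)) a = rpoly t a * (rpoly g a * b)"
      using assms by (simp add: eq_neg_iff_add_eq_0 [symmetric])
    also have "\<dots> = b"
      using t by (simp add: mult.assoc [symmetric])
    finally show False
      using root_not_rpoly_of_root by blast
  qed
  moreover have "rpoly f a = 0"
    using assms calculation by simp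
  ultimately show "p dvd f" "p dvd g"
    using dvd_if_root root_iff by blast+
qed

lemma inverse_in_rat_adjoin:
  assumes "u \<in> rat_adjoin a b"
  shows "inverse u \<in> rat_adjoin a b"
proof (cases "u = 0")
  case True
  then show ?thesis
    using rat_adjoin_in [of 0 a 0 b] by simp
next
  case False
  obtain f g where u: "u = rpoly f a + rpoly g a * b"
    using assms by (elim rat_adjoin_cases)
  define X :: "rat poly" where "X = [:0, 1:]"
  define u' where "u' = rpoly f a + rpoly g a * c"
  have u': "u' = rpoly (f - g * X) a + rpoly (- g) a * b"
    unfolding u'_def third_root X_def by (simp add: algebra_simps)
  have "u' \<noteq> 0"
  proof
    assume "u' = 0"
    then have "p dvd f - g * X" "p dvd - g"
      using coords_zero_imp_dvd unfolding u' by blast+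
    then have "rpoly (f - g * X) a = 0" "rpoly (- g) a = 0"
      using rpoly_eq_0_if_dvd root_iff by blast+
    then show False
      using False u by simp
  qed
  define N where "N = f * f - f * g * X + g * g * [:P, 0, 1:]"
  have norm: "u * u' = rpoly N a"
    unfolding u u'_def N_def X_def by (rule times_conjugate)
  then obtain t where t: "rpoly t a * rpoly N a = 1"
    using irreducible_rpoly_inverse [OF irreducible] root_iff False \<open>u' \<noteq> 0\<close>
    by (metis mult_eq_0_iff)
  have "u * (rpoly t a * u') = rpoly t a * (u * u')"
    by (rule mult.left_commute)
  then have "u * (rpoly t a * u') = 1"
    using t norm by simp
  then have "inverse u = rpoly t a * u'"
    by (rule inverse_unique)
  also have "\<dots> = rpoly (t * (f - g * X)) a + rpoly (t * - g) a * b"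
    unfolding u' by (simp add: algebra_simps)
  finally show ?thesis
    by (simp only: rat_adjoin_in)
qed

lemma subfield_rat_adjoin: "subfield_C (rat_adjoin a b)"
  unfolding subfield_C_def
proof (intro conjI ballI)
  show "0 \<in> rat_adjoin a b" "1 \<in> rat_adjoin a b"
    using rat_adjoin_in [of 0 a 0 b] rat_adjoin_in [of 1 a 0 b] by simp_all
  fix u v
  assume "u \<in> rat_adjoin a b" "v \<in> rat_adjoin a b"
  then obtain f g f' g' where u: "u = rpoly f a + rpoly g a * b" and v: "v = rpoly f' a + rpoly g' a * b"
    by (elim rat_adjoin_cases)
  show "u + v \<in> rat_adjoin a b"
    using rat_adjoin_in [of "f + f'" a "g + g'" b] unfolding u v by (simp add: algebra_simps)
  show "u * v \<in> rat_adjoin a b"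
    unfolding u v times_coords by (rule rat_adjoin_in)
  show "- u \<in> rat_adjoin a b"
    using rat_adjoin_in [of "- f" a "- g" b] unfolding u by simp
  show "inverse u \<in> rat_adjoin a b"
    using \<open>u \<in> rat_adjoin a b\<close> by (rule inverse_in_rat_adjoin)
qed

lemma splitting_field_eq: "splitting_field_C p = rat_adjoin a b"
proof (rule splitting_field_C_eqI)
  show "subfield_C (rat_adjoin a b)"
    by (rule subfield_rat_adjoin)
  have abc: "a \<in> rat_adjoin a b" "b \<in> rat_adjoin a b" "c \<in> rat_adjoin a b"
    using rat_adjoin_in [of "[:0, 1:]" a 0 b] rat_adjoin_in [of 0 a 1 b]
      rat_adjoin_in [of "- [:0, 1:]" a "- 1" b] third_root by simp_all
  show "z \<in> rat_adjoin a b" if "rpoly p z = 0" for z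
    using that abc unfolding root_iff by blast
  show "rat_adjoin a b \<subseteq> K"
    if K: "subfield_C K" and roots: "\<And>z. rpoly p z = 0 \<Longrightarrow> z \<in> K" for K
  proof
    fix u
    assume "u \<in> rat_adjoin a b"
    then obtain f g where u: "u = rpoly f a + rpoly g a * b"
      by (elim rat_adjoin_cases)
    have "a \<in> K" "b \<in> K"
      using roots root_iff by blast+
    then show "u \<in> K"
      unfolding u using K subfield_C_rpoly by (simp add: subfield_C_def)
  qed
qed

lemma S3_cubic_of_two_roots:
  assumes "rpoly p x = 0" "rpoly p y = 0" "x \<noteq> y"
  shows "S3_cubic P Q x y (- x - y)"
  using depressed_cubic_roots_of_two_roots [OF assms] irreducible disc_not_square
  by (simp add: S3_cubic_def S3_cubic_axioms_def)

lemma gal_group_coords: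
  assumes "\<sigma> \<in> carrier (gal_group p)"
  shows "\<sigma> (rpoly f a + rpoly g a * b) = rpoly f (\<sigma> a) + rpoly g (\<sigma> a) * \<sigma> b"
proof -
  have K: "subfield_C (splitting_field_C p)" and ab: "a \<in> splitting_field_C p" "b \<in> splitting_field_C p"
    using subfield_splitting_field_C root_in_splitting_field_C root_iff by blast+
  then have "rpoly f a \<in> splitting_field_C p" "rpoly g a \<in> splitting_field_C p"
    by (simp_all add: subfield_C_rpoly)
  then show ?thesis
    using assms K ab by (simp add: gal_group_add gal_group_times gal_group_rpoly subfield_C_def)
qed

lemma gal_group_eqI:
  assumes \<sigma>: "\<sigma> \<in> carrier (gal_group p)" and \<tau>: "\<tau> \<in> carrier (gal_group p)"
    and "\<sigma> a = \<tau> a" "\<sigma> b = \<tau> b"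
  shows "\<sigma> = \<tau>"
proof
  fix u
  show "\<sigma> u = \<tau> u"
  proof (cases "u \<in> rat_adjoin a b")
    case True
    then obtain f g where "u = rpoly f a + rpoly g a * b"
      by (elim rat_adjoin_cases)
    then show ?thesis
      using gal_group_coords [OF \<sigma>] gal_group_coords [OF \<tau>] assms(3,4) by simp
  next
    case False
    then show ?thesis
      using gal_group_outside [OF \<sigma>] gal_group_outside [OF \<tau>] splitting_field_eq by simp
  qed
qed

definition root_aut :: "complex \<Rightarrow> complex \<Rightarrow> complex \<Rightarrow> complex" where
  "root_aut x y u =
     (if u \<in> rat_adjoin a b
      then (case (SOME (f, g). u = rpoly f a + rpoly g a * b) of (f, g) \<Rightarrow> rpoly f x + rpoly g x * y)
      else u)"

lemma root_aut_coords:
  assumes "rpoly p x = 0"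
  shows "root_aut x y (rpoly f a + rpoly g a * b) = rpoly f x + rpoly g x * y"
proof -
  define u where "u = rpoly f a + rpoly g a * b"
  obtain f0 g0 where sel: "(SOME (f, g). u = rpoly f a + rpoly g a * b) = (f0, g0)"
    by (metis surj_pair)
  have "\<exists>fg. case fg of (f, g) \<Rightarrow> u = rpoly f a + rpoly g a * b"
    using u_def by auto
  then have "u = rpoly f0 a + rpoly g0 a * b"
    using someI_ex [of "\<lambda>(f, g). u = rpoly f a + rpoly g a * b"] sel by simp
  then have "rpoly (f - f0) a + rpoly (g - g0) a * b = 0"
    unfolding u_def by (simp add: algebra_simps)
  then have "rpoly (f - f0) x = 0" "rpoly (g - g0) x = 0"
    using coords_zero_imp_dvd rpoly_eq_0_if_dvd assms by blast+
  have "root_aut x y u = rpoly f0 x + rpoly g0 x * y"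
    using sel rat_adjoin_in [of f a g b] unfolding root_aut_def u_def by simp
  also have "\<dots> = rpoly f x + rpoly g x * y"
    using \<open>rpoly (f - f0) x = 0\<close> \<open>rpoly (g - g0) x = 0\<close> by simp
  finally show ?thesis
    unfolding u_def .
qed

lemma root_aut_roots:
  assumes "rpoly p x = 0"
  shows "root_aut x y a = x" "root_aut x y b = y" "root_aut x y c = - x - y"
  using root_aut_coords [OF assms, of y "[:0, 1:]" 0] root_aut_coords [OF assms, of y 0 1]
    root_aut_coords [OF assms, of y "- [:0, 1:]" "- 1"] third_root by simp_all

lemma root_aut_image:
  assumes "rpoly p x = 0"
  shows "root_aut x y ` rat_adjoin a b = rat_adjoin x y"
  unfolding rat_adjoin_def image_image by (rule image_cong) (auto simp: root_aut_coords [OF assms])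

context
  fixes x y :: complex
  assumes x: "rpoly p x = 0" and y: "rpoly p y = 0" and "x \<noteq> y"
begin

lemma root_aut_add:
  assumes "u \<in> rat_adjoin a b" "v \<in> rat_adjoin a b"
  shows "root_aut x y (u + v) = root_aut x y u + root_aut x y v"
proof -
  obtain f g f' g' where u: "u = rpoly f a + rpoly g a * b" and v: "v = rpoly f' a + rpoly g' a * b"
    using assms by (elim rat_adjoin_cases)
  have "root_aut x y (u + v) = root_aut x y (rpoly (f + f') a + rpoly (g + g') a * b)"
    unfolding u v by (simp add: algebra_simps)
  also have "\<dots> = root_aut x y u + root_aut x y v"
    unfolding u v root_aut_coords [OF x] by (simp add: algebra_simps)
  finally show ?thesis .
qed

lemma root_aut_mult:
  assumes "u \<in> rat_adjoin a b" "v \<in> rat_adjoin a b"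
  shows "root_aut x y (u * v) = root_aut x y u * root_aut x y v"
proof -
  interpret xy: S3_cubic P Q x y "- x - y"
    using S3_cubic_of_two_roots x y \<open>x \<noteq> y\<close> .
  obtain f g f' g' where u: "u = rpoly f a + rpoly g a * b" and v: "v = rpoly f' a + rpoly g' a * b"
    using assms by (elim rat_adjoin_cases)
  show ?thesis
    unfolding u v times_coords root_aut_coords [OF x] xy.times_coords ..
qed

lemma inj_on_root_aut: "inj_on (root_aut x y) (rat_adjoin a b)"
proof (rule inj_onI)
  interpret xy: S3_cubic P Q x y "- x - y"
    using S3_cubic_of_two_roots x y \<open>x \<noteq> y\<close> .
  fix u v
  assume "u \<in> rat_adjoin a b" "v \<in> rat_adjoin a b" and eq: "root_aut x y u = root_aut x y v"
  then obtain f g f' g' where u: "u = rpoly f a + rpoly g a * b" and v: "v = rpoly f' a + rpoly g' a * b"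
    by (elim rat_adjoin_cases)
  have "rpoly (f - f') x + rpoly (g - g') x * y = 0"
    using eq unfolding u v root_aut_coords [OF x] by (simp add: algebra_simps)
  then have "rpoly (f - f') a = 0" "rpoly (g - g') a = 0"
    using xy.coords_zero_imp_dvd rpoly_eq_0_if_dvd root_iff by blast+
  then show "u = v"
    unfolding u v by simp
qed

lemma root_aut_in_gal_group: "root_aut x y \<in> carrier (gal_group p)"
proof (rule gal_group_memI, unfold splitting_field_eq)
  interpret xy: S3_cubic P Q x y "- x - y"
    using S3_cubic_of_two_roots x y \<open>x \<noteq> y\<close> .
  have "root_aut x y ` rat_adjoin a b = rat_adjoin a b"
    using root_aut_image [OF x] xy.splitting_field_eq splitting_field_eq by simp
  then show "bij_betw (root_aut x y) (rat_adjoin a b) (rat_adjoin a b)"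
    using inj_on_root_aut by (simp add: bij_betw_def)
  show "root_aut x y (of_rat r) = of_rat r" for r
    using root_aut_coords [OF x, of y "[:r:]" 0] by simp
  show "root_aut x y u = u" if "u \<notin> rat_adjoin a b" for u
    using that by (simp add: root_aut_def)
qed (simp_all add: root_aut_add root_aut_mult)

end

definition indexed_root :: "nat \<Rightarrow> complex" where
  "indexed_root i = (if i = 1 then a else if i = 2 then b else c)"

definition root_index :: "complex \<Rightarrow> nat" where
  "root_index z = (if z = a then 1 else if z = b then 2 else 3)"

definition root_perm :: "(complex \<Rightarrow> complex) \<Rightarrow> nat \<Rightarrow> nat" where
  "root_perm \<sigma> i = (if i \<in> {1..3} then root_index (\<sigma> (indexed_root i)) else i)"

lemma rpoly_indexed_root: "rpoly p (indexed_root i) = 0"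
  by (simp add: indexed_root_def root_iff)

lemma root_index_in: "root_index z \<in> {1..3}"
  by (simp add: root_index_def)

lemma root_index_indexed_root: "i \<in> {1..3} \<Longrightarrow> root_index (indexed_root i) = i"
  using roots_distinct by (auto simp: root_index_def indexed_root_def)

lemma indexed_root_root_index: "rpoly p z = 0 \<Longrightarrow> indexed_root (root_index z) = z"
  using roots_distinct by (auto simp: root_index_def indexed_root_def root_iff)

lemma root_perm_permutes:
  assumes \<sigma>: "\<sigma> \<in> carrier (gal_group p)"
  shows "root_perm \<sigma> permutes {1..3}"
proof (rule bij_imp_permutes)
  have "inj_on (root_perm \<sigma>) {1..3}"
  proof (rule inj_onI)
    fix i j
    assume ij: "i \<in> {1..3}" "j \<in> {1..3}" and "root_perm \<sigma> i = root_perm \<sigma> j"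
    then have "indexed_root (root_index (\<sigma> (indexed_root i))) =
        indexed_root (root_index (\<sigma> (indexed_root j)))"
      by (simp add: root_perm_def)
    then have "\<sigma> (indexed_root i) = \<sigma> (indexed_root j)"
      using gal_group_root [OF \<sigma>] rpoly_indexed_root indexed_root_root_index by metis
    then have "indexed_root i = indexed_root j"
      using gal_group_inj_on [OF \<sigma>] root_in_splitting_field_C rpoly_indexed_root by (metis inj_onD)
    then show "i = j"
      using ij root_index_indexed_root by metis
  qed
  moreover have "root_perm \<sigma> ` {1..3} \<subseteq> {1..3}"
    using root_index_in by (auto simp: root_perm_def)
  ultimately show "bij_betw (root_perm \<sigma>) {1..3} {1..3}"
    by (simp add: bij_betw_def endo_inj_surj)
  show "root_perm \<sigma> i = i" if "i \<notin> {1..3}" for i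
    using that by (auto simp: root_perm_def)
qed

lemma root_perm_comp:
  assumes "\<sigma> \<in> carrier (gal_group p)" and \<tau>: "\<tau> \<in> carrier (gal_group p)"
  shows "root_perm (\<sigma> \<circ> \<tau>) = root_perm \<sigma> \<circ> root_perm \<tau>"
proof
  fix i
  show "root_perm (\<sigma> \<circ> \<tau>) i = (root_perm \<sigma> \<circ> root_perm \<tau>) i"
    using gal_group_root [OF \<tau> rpoly_indexed_root [of i]] root_index_in
    by (simp add: root_perm_def indexed_root_root_index del: atLeastAtMost_iff)
qed

lemma inj_on_root_perm: "inj_on root_perm (carrier (gal_group p))"
proof (rule inj_onI)
  fix \<sigma> \<tau>
  assume \<sigma>: "\<sigma> \<in> carrier (gal_group p)" and \<tau>: "\<tau> \<in> carrier (gal_group p)"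
    and "root_perm \<sigma> = root_perm \<tau>"
  then have "root_index (\<sigma> (indexed_root i)) = root_index (\<tau> (indexed_root i))" if "i \<in> {1..3}" for i
    using that by (metis root_perm_def)
  then have "\<sigma> (indexed_root i) = \<tau> (indexed_root i)" if "i \<in> {1..3}" for i
    using that gal_group_root [OF \<sigma>] gal_group_root [OF \<tau>] rpoly_indexed_root
    by (metis indexed_root_root_index)
  from this [of 1] this [of 2] show "\<sigma> = \<tau>"
    using \<sigma> \<tau> by (intro gal_group_eqI) (simp_all add: indexed_root_def)
qed

lemma root_perm_surj:
  assumes \<pi>: "\<pi> permutes {1..3}"
  shows "\<pi> \<in> root_perm ` carrier (gal_group p)"
proof -
  define x y where "x = indexed_root (\<pi> 1)" and "y = indexed_root (\<pi> 2)"
  have \<pi>_in: "\<pi> i \<in> {1..3}" if "i \<in> {1..3}" for i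
    using that permutes_in_image [OF \<pi>] by simp
  have distinct: "indexed_root (\<pi> i) \<noteq> indexed_root (\<pi> j)"
    if "i \<in> {1..3}" "j \<in> {1..3}" "i \<noteq> j" for i j
    using that \<pi>_in root_index_indexed_root permutes_inj [OF \<pi>] by (metis injD)
  have xy: "rpoly p x = 0" "rpoly p y = 0" "x \<noteq> y"
    using distinct [of 1 2] by (simp_all add: x_def y_def rpoly_indexed_root)
  interpret xy: S3_cubic P Q x y "- x - y"
    using S3_cubic_of_two_roots xy .
  have third: "indexed_root (\<pi> 3) = - x - y"
    using distinct [of 3 1] distinct [of 3 2] xy.root_iff rpoly_indexed_root
    unfolding x_def y_def by auto
  note root_aut_roots [OF xy(1), of y]
  moreover have "indexed_root 1 = a" "indexed_root 2 = b" "indexed_root 3 = c"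
    by (simp_all add: indexed_root_def)
  moreover have "i = 1 \<or> i = 2 \<or> i = 3" if "i \<in> {1..3}" for i :: nat
    using that by auto
  ultimately have "root_aut x y (indexed_root i) = indexed_root (\<pi> i)" if "i \<in> {1..3}" for i
    using that third x_def y_def by fastforce
  then have "root_perm (root_aut x y) = \<pi>"
    using \<pi>_in root_index_indexed_root permutes_not_in [OF \<pi>] by (auto simp: root_perm_def fun_eq_iff)
  then show ?thesis
    using root_aut_in_gal_group [OF xy] by blast
qed

theorem gal_group_iso_sym_group: "gal_group p \<cong> sym_group 3"
proof (rule is_isoI)
  have carrier: "root_perm \<sigma> \<in> carrier (sym_group 3)" if "\<sigma> \<in> carrier (gal_group p)" for \<sigma>
    using root_perm_permutes [OF that] by (simp only: sym_group_carrier)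
  show "root_perm \<in> iso (gal_group p) (sym_group 3)"
  proof (rule isoI)
    show "root_perm \<in> hom (gal_group p) (sym_group 3)"
      using carrier by (intro homI) (simp_all add: gal_group_mult sym_group_mult root_perm_comp)
    have "\<pi> \<in> root_perm ` carrier (gal_group p)" if "\<pi> \<in> carrier (sym_group 3)" for \<pi>
      using root_perm_surj that by (simp only: sym_group_carrier)
    then have "root_perm ` carrier (gal_group p) = carrier (sym_group 3)"
      using carrier by blast
    then show "bij_betw root_perm (carrier (gal_group p)) (carrier (sym_group 3))"
      using inj_on_root_perm by (simp add: bij_betw_def)
  qed
qed

end

theorem gal_group_depressed_cubic_iso_sym_group:
  assumes "irreducible (depressed_cubic P Q)" and "\<not> is_square (cubic_disc P Q)"
  shows "gal_group (depressed_cubic P Q) \<cong> sym_group 3"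
proof -
  obtain a b c where "depressed_cubic_roots P Q a b c"
    by (rule depressed_cubic_roots_exist)
  then interpret S3_cubic P Q a b c
    using assms by (simp add: S3_cubic_def S3_cubic_axioms_def)
  show ?thesis
    by (rule gal_group_iso_sym_group)
qed

section \<open>The cubics \<open>P\<^sub>n\<close>\<close>

lemma Pn_int_root:
  fixes n r :: int
  assumes "r ^ 3 - 3 * (n + 1) * r + 2 * (n + 1) = 0"
  shows "n \<in> {- 1, 0, 1}"
proof -
  have "8 = (3 * r - 2) * (27 * (n + 1) - 9 * r ^ 2 - 6 * r - 4)"
    using assms by (simp add: algebra_simps power2_eq_square power3_eq_cube)
  then have "3 * r - 2 dvd 8"
    by (metis dvd_triv_left)
  then have "\<bar>3 * r - 2\<bar> \<le> 8"
    using dvd_imp_le_int [of 8 "3 * r - 2"] by simp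
  then have "r \<in> {- 2, - 1, 0, 1, 2, 3}"
    by auto
  then show ?thesis
    using assms by (auto simp: power3_eq_cube; presburger)
qed

lemma Pn_irreducible:
  fixes n :: int
  assumes "n \<notin> {- 1, 0, 1}"
  shows "irreducible (depressed_cubic (- 3 * (of_int n + 1)) (2 * (of_int n + 1)))"
proof (rule irreducible_if_no_roots)
  show "degree (depressed_cubic (- 3 * (of_int n + 1)) (2 * (of_int n + 1))) \<in> {2, 3}"
    by (simp add: depressed_cubic_def)
  fix x :: rat
  show "poly (depressed_cubic (- 3 * (of_int n + 1)) (2 * (of_int n + 1))) x \<noteq> 0"
  proof
    assume "poly (depressed_cubic (- 3 * (of_int n + 1)) (2 * (of_int n + 1))) x = 0"
    then have root: "x ^ 3 + of_int (- 3 * (n + 1)) * x + of_int (2 * (n + 1)) = 0"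
      by (simp add: depressed_cubic_def algebra_simps power3_eq_cube)
    then obtain r where "x = of_int r"
      using rat_root_of_int_depressed_cubic_in_Ints by (metis Ints_cases)
    then have "of_int (r ^ 3 - 3 * (n + 1) * r + 2 * (n + 1)) = (0 :: rat)"
      using root by (simp add: algebra_simps)
    then show False
      using Pn_int_root assms by (metis of_int_eq_0_iff)
  qed
qed

lemma Pn_cubic_disc:
  "cubic_disc (- 3 * (of_int n + 1)) (2 * (of_int n + 1)) = of_int (3 * n) * (6 * (of_int n + 1)) ^ 2"
  by (simp add: cubic_disc_def algebra_simps power2_eq_square power3_eq_cube)

lemma Pn_disc_not_square:
  fixes n :: int
  assumes "n \<noteq> -1" and "\<not> is_square (3 * n)"
  shows "\<not> is_square (cubic_disc (- 3 * (of_int n + 1)) (2 * (of_int n + 1)))"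
proof
  have "(of_int (n + 1) :: rat) \<noteq> 0"
    using assms(1) by simp
  then have "(6 * (of_int n + 1) :: rat) ^ 2 \<noteq> 0"
    by simp
  moreover assume "is_square (cubic_disc (- 3 * (of_int n + 1)) (2 * (of_int n + 1)))"
  ultimately have "is_square (of_int (3 * n) :: rat)"
    unfolding Pn_cubic_disc by (simp add: is_nth_power_mult_cancel_right)
  then show False
    using assms(2) int_square_if_rat_square by blast
qed

theorem lemma5p1:
  fixes n :: int
  assumes "n \<noteq> 1" and "n \<noteq> -1"
    and "\<not> (\<exists>m::int. 3 * n = m ^ 2)"
  shows "gal_group [: 2 * (of_int n + 1), - 3 * (of_int n + 1), 0, 1 :] \<cong> sym_group 3"
proof -
  have "\<not> is_square (3 * n)"
    using assms(3) by (auto elim: is_nth_powerE)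
  moreover have "n \<notin> {- 1, 0, 1}"
    using assms by auto
  ultimately have
    "gal_group (depressed_cubic (- 3 * (of_int n + 1)) (2 * (of_int n + 1))) \<cong> sym_group 3"
    using assms(2) Pn_irreducible Pn_disc_not_square by (intro gal_group_depressed_cubic_iso_sym_group)
  then show ?thesis
    by (simp add: depressed_cubic_def)
qed

end
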